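(* Let $p$ be a prime, $q$ a power of $p$, and $m_0 \in \mathbb{N}$. Assume that for every $k \in \mathbb{N}$ and all $d_1,\dots,d_{m_0} \in \mathbb{N}$, the set $B(p^k; d_1,\dots,d_{m_0}; 1,\dots,1)$ is an $\overline{\mathbb{F}_p}(t)$-DML set over split torus. Let $c_1,\dots,c_{m_0+1} \in \mathbb{N}$. If $B(q; c_1,\dots,c_{m_0+1}; 1,\dots,1)$ is an $\overline{\mathbb{F}_p}(t)$-DML set over split torus, then $B(q; c_1,\dots,c_{m_0}, q c_{m_0+1}; 1,\dots,1)$ is also an $\overline{\mathbb{F}_p}(t)$-DML set over split torus.
   Context: For a power $q$ of $p$, $m \in \mathbb{N}$ and $c_1,\dots,c_m \in \mathbb{N}$, $B(q; c_1,\dots,c_m; 1,\dots,1) = \{ \sum_{j=1}^m c_j q^{n_j} : n_1,\dots,n_m \in \mathbb{N}_0\}$. For a field $K$ and a quasi-projective variety $X$ over $K$, a set $S \subseteq \mathbb{N}_0$ is a $K$-DML set over $X$ if there exist an endomorphism $\Phi$ of $X$ (a morphism $X \to X$ defined over $K$), a point $\alpha \in X(K)$ and a closed subvariety $V \subseteq X$ defined over $K$ (not necessarily irreducible) such that $S = \{ n \in \mathbb{N}_0 : \Phi^n(\alpha) \in V(K)\}$. $S$ is a $K$-DML set over split torus if it is a $K$-DML set over $\mathbb{G}_m^k$ for some $k \in \mathbb{N}$. *)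

theory Defs
  imports "HOL-Computational_Algebra.Computational_Algebra"
          "HOL-Computational_Algebra.Fraction_Field"
          "HOL-Library.Poly_Mapping"
begin

text \<open>The coefficient tuple (c_1,...,c_m) is the list c (c_j = c ! (j-1)).\<close>
definition Bset :: "nat \<Rightarrow> nat list \<Rightarrow> nat set" where
  "Bset q c = {(\<Sum>j<length c. (c ! j) * q ^ (n j)) | n :: nat \<Rightarrow> nat. True}"

text \<open>Laurent polynomials over K in the variables x_0, x_1, ...: finitely supported
  maps from exponent vectors (finitely supported nat => int) to K.  With the
  convolution product this is the ring K[x_i^{+-1}]. The coordinate ring of the
  split torus G_m^k is the subring of those using only x_0..x_{k-1}.\<close>
type_synonym 'a lpoly = "(nat \<Rightarrow>\<^sub>0 int) \<Rightarrow>\<^sub>0 'a"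

definition in_vars :: "nat \<Rightarrow> ((nat \<Rightarrow>\<^sub>0 int) \<Rightarrow>\<^sub>0 'a::zero) \<Rightarrow> bool" where
  "in_vars k f \<longleftrightarrow> (\<forall>e \<in> Poly_Mapping.keys f. Poly_Mapping.keys e \<subseteq> {..<k})"

definition lpeval :: "'a::field lpoly \<Rightarrow> (nat \<Rightarrow> 'a) \<Rightarrow> 'a" where
  "lpeval f x = (\<Sum>e \<in> Poly_Mapping.keys f. Poly_Mapping.lookup f e * (\<Prod>i \<in> Poly_Mapping.keys e. x i powi Poly_Mapping.lookup e i))"

text \<open>K-points of G_m^k: tuples of k nonzero elements (normalised to 0 beyond index k).\<close>
definition torus_points :: "nat \<Rightarrow> (nat \<Rightarrow> 'a::field) set" where
  "torus_points k = {x. (\<forall>i<k. x i \<noteq> 0) \<and> (\<forall>i\<ge>k. x i = 0)}"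

text \<open>An endomorphism of G_m^k defined over K is given by a K-algebra endomorphism of the
  coordinate ring K[x_1^{+-1},...,x_k^{+-1}], i.e. by images Phi_0,...,Phi_{k-1} of the
  variables that are units of that ring.\<close>
definition torus_endo :: "nat \<Rightarrow> (nat \<Rightarrow> 'a::field lpoly) \<Rightarrow> bool" where
  "torus_endo k \<Phi> \<longleftrightarrow>
     (\<forall>i<k. in_vars k (\<Phi> i) \<and> (\<exists>g. in_vars k g \<and> \<Phi> i * g = 1))"

definition endo_map :: "nat \<Rightarrow> (nat \<Rightarrow> 'a::field lpoly) \<Rightarrow> (nat \<Rightarrow> 'a) \<Rightarrow> (nat \<Rightarrow> 'a)" where
  "endo_map k \<Phi> x = (\<lambda>i. if i < k then lpeval (\<Phi> i) x else 0)"

definition zero_set :: "nat \<Rightarrow> 'a::field lpoly set \<Rightarrow> (nat \<Rightarrow> 'a) set" where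
  "zero_set k F = {x \<in> torus_points k. \<forall>f\<in>F. lpeval f x = 0}"

definition DML_set_torus :: "'a::field itself \<Rightarrow> nat \<Rightarrow> nat set \<Rightarrow> bool" where
  "DML_set_torus K k S \<longleftrightarrow>
     (\<exists>(\<Phi> :: nat \<Rightarrow> 'a lpoly) \<alpha> F.
        torus_endo k \<Phi> \<and> \<alpha> \<in> torus_points k \<and> finite F \<and> (\<forall>f\<in>F. in_vars k f) \<and>
        S = {n. (endo_map k \<Phi> ^^ n) \<alpha> \<in> zero_set k F})"

definition DML_split_torus :: "'a::field itself \<Rightarrow> nat set \<Rightarrow> bool" where
  "DML_split_torus K S \<longleftrightarrow> (\<exists>k\<ge>1. DML_set_torus K k S)"

text \<open>A field is (isomorphic to) an algebraic closure of F_p iff it is algebraically closed,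
  of characteristic p, and algebraic over its prime field (the image of of_nat).\<close>
definition is_alg_closure_Fp :: "'a::alg_closed_field itself \<Rightarrow> nat \<Rightarrow> bool" where
  "is_alg_closure_Fp K p \<longleftrightarrow> CHAR('a) = p \<and>
     (\<forall>x::'a. \<exists>P::'a poly. P \<noteq> 0 \<and> (\<forall>i. coeff P i \<in> range of_nat) \<and> poly P x = 0)"

end

theory Submission
  imports Defs
begin

text \<open>
  Write d for (c_1, ..., c_m0, q c_(m0+1)). In an element of B(q; d) either all exponents of
  c_1, ..., c_m0 are positive, and it is q times an element of B(q; c), or some c_i has exponent 0,
  and it is c_i plus an element of B(q; d_i), where d_i arises from (c_1, ..., c_m0) by replacing
  c_i with q c_(m0+1). So B(q; d) = q B(q; c) \<union> \<Union>_i (c_i + B(q; d_i)), and d_i has m0 entries.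
  DML sets over split tori are closed under finite unions (product torus, products of the
  equations) and under images of affine maps n \<mapsto> a n + b (replay the orbit in a shift register of
  a + b copies of the torus, each with a flag coordinate taking the value 1 or some t \<notin> {0, 1}).
\<close>

definition monom_eval :: "(nat \<Rightarrow>\<^sub>0 int) \<Rightarrow> (nat \<Rightarrow> 'a::field) \<Rightarrow> 'a" where
  "monom_eval e x = (\<Prod>i \<in> Poly_Mapping.keys e. x i powi Poly_Mapping.lookup e i)"

lemma monom_eval_superset:
  assumes "finite B" "Poly_Mapping.keys e \<subseteq> B"
  shows "monom_eval e x = (\<Prod>i\<in>B. x i powi Poly_Mapping.lookup e i)"
  unfolding monom_eval_def
  by (rule prod.mono_neutral_left) (use assms in \<open>auto simp: in_keys_iff\<close>)

lemma monom_eval_add: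
  assumes "\<forall>i. x i \<noteq> 0"
  shows "monom_eval (e + e') x = monom_eval e x * monom_eval e' x"
proof -
  let ?B = "Poly_Mapping.keys e \<union> Poly_Mapping.keys e'"
  have "monom_eval (e + e') x = (\<Prod>i\<in>?B. x i powi Poly_Mapping.lookup (e + e') i)"
    by (rule monom_eval_superset) (auto dest: keys_add[THEN subsetD])
  also have "\<dots> = (\<Prod>i\<in>?B. x i powi Poly_Mapping.lookup e i * x i powi Poly_Mapping.lookup e' i)"
    by (rule prod.cong) (auto simp: lookup_add power_int_add assms)
  also have "\<dots> = monom_eval e x * monom_eval e' x"
    by (simp add: prod.distrib monom_eval_superset[of ?B])
  finally show ?thesis .
qed

lemma lpeval_eq_sum_monom_eval:
  "lpeval f x = (\<Sum>e\<in>Poly_Mapping.keys f. Poly_Mapping.lookup f e * monom_eval e x)"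
  by (simp add: lpeval_def monom_eval_def)

lemma lpeval_superset:
  assumes "finite A" "Poly_Mapping.keys f \<subseteq> A"
  shows "lpeval f x = (\<Sum>e\<in>A. Poly_Mapping.lookup f e * monom_eval e x)"
  unfolding lpeval_eq_sum_monom_eval
  by (rule sum.mono_neutral_left) (use assms in \<open>auto simp: in_keys_iff\<close>)

lemma lpeval_zero [simp]: "lpeval 0 x = 0"
  by (simp add: lpeval_def)

lemma lpeval_one [simp]: "lpeval 1 x = 1"
  by (simp add: lpeval_def)

lemma lpeval_single: "lpeval (Poly_Mapping.single e c) x = c * monom_eval e x"
  by (simp add: lpeval_eq_sum_monom_eval)

lemma lpeval_add: "lpeval (f + g) x = lpeval f x + lpeval g x"
proof -
  let ?A = "Poly_Mapping.keys f \<union> Poly_Mapping.keys g"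
  have "lpeval (f + g) x = (\<Sum>e\<in>?A. Poly_Mapping.lookup (f + g) e * monom_eval e x)"
    by (rule lpeval_superset) (auto dest: keys_add[THEN subsetD])
  then show ?thesis
    by (simp add: lookup_add distrib_right sum.distrib lpeval_superset[of ?A])
qed

lemma lpeval_diff: "lpeval (f - g) x = lpeval f x - lpeval g x"
proof -
  let ?A = "Poly_Mapping.keys f \<union> Poly_Mapping.keys g"
  have "lpeval (f - g) x = (\<Sum>e\<in>?A. Poly_Mapping.lookup (f - g) e * monom_eval e x)"
    by (rule lpeval_superset) (auto simp: in_keys_iff lookup_minus)
  then show ?thesis
    by (simp add: lookup_minus left_diff_distrib sum_subtractf lpeval_superset[of ?A])
qed

lemma lpeval_sum: "lpeval (sum g I) x = (\<Sum>i\<in>I. lpeval (g i) x)"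
  by (induction I rule: infinite_finite_induct) (auto simp: lpeval_add)

lemma poly_mapping_sum_single:
  "f = (\<Sum>e\<in>Poly_Mapping.keys f. Poly_Mapping.single e (Poly_Mapping.lookup f e))"
  by (rule poly_mapping_eqI) (auto simp: lookup_sum lookup_single when_def in_keys_iff)

lemma mult_eq_sum_single:
  "f * g = (\<Sum>e\<in>Poly_Mapping.keys f. \<Sum>e'\<in>Poly_Mapping.keys g.
     Poly_Mapping.single (e + e') (Poly_Mapping.lookup f e * Poly_Mapping.lookup g e'))"
  by (subst poly_mapping_sum_single[of f], subst poly_mapping_sum_single[of g])
     (simp add: sum_product mult_single)

lemma lpeval_mult:
  assumes "\<forall>i. x i \<noteq> 0"
  shows "lpeval (f * g) x = lpeval f x * lpeval g x"
proof -
  have "lpeval (f * g) x = (\<Sum>e\<in>Poly_Mapping.keys f. \<Sum>e'\<in>Poly_Mapping.keys g.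
      (Poly_Mapping.lookup f e * monom_eval e x) * (Poly_Mapping.lookup g e' * monom_eval e' x))"
    unfolding mult_eq_sum_single
    by (simp add: lpeval_sum lpeval_single monom_eval_add[OF assms] mult_ac)
  then show ?thesis
    by (simp add: lpeval_eq_sum_monom_eval sum_product)
qed

definition lpvar :: "nat \<Rightarrow> 'a::field lpoly" where
  "lpvar i = Poly_Mapping.single (Poly_Mapping.single i 1) 1"

lemma lpeval_lpvar [simp]: "lpeval (lpvar i) x = x i"
  by (simp add: lpvar_def lpeval_single monom_eval_def)

lemma in_vars_mono: "in_vars k f \<Longrightarrow> k \<le> k' \<Longrightarrow> in_vars k' f"
  unfolding in_vars_def by (meson lessThan_subset_iff order_trans)

lemma in_vars_one: "in_vars k 1"
  by (simp add: in_vars_def)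

lemma in_vars_lpvar: "i < k \<Longrightarrow> in_vars k (lpvar i)"
  by (simp add: in_vars_def lpvar_def)

lemma in_vars_mult: "in_vars k f \<Longrightarrow> in_vars k g \<Longrightarrow> in_vars k (f * g)"
  unfolding in_vars_def by (auto dest!: keys_mult[THEN subsetD] keys_add[THEN subsetD])

lemma in_vars_diff: "in_vars k f \<Longrightarrow> in_vars k g \<Longrightarrow> in_vars k (f - g)"
  unfolding in_vars_def by (metis (no_types, lifting) in_keys_iff lookup_minus diff_zero)

lemma lpeval_cong_in_vars:
  assumes "in_vars k f" "\<forall>i<k. x i = y i"
  shows "lpeval f x = lpeval f y"
  using assms unfolding lpeval_def in_vars_def
  by (intro sum.cong refl arg_cong[where f = "\<lambda>u. _ * u"] prod.cong) (auto simp: subset_iff)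

definition shift_exps :: "nat \<Rightarrow> (nat \<Rightarrow>\<^sub>0 int) \<Rightarrow> (nat \<Rightarrow>\<^sub>0 int)" where
  "shift_exps s e = (\<Sum>i\<in>Poly_Mapping.keys e. Poly_Mapping.single (i + s) (Poly_Mapping.lookup e i))"

lemma lookup_shift_exps:
  "Poly_Mapping.lookup (shift_exps s e) j = (if s \<le> j then Poly_Mapping.lookup e (j - s) else 0)"
proof -
  have "Poly_Mapping.lookup (shift_exps s e) j =
      (\<Sum>i\<in>Poly_Mapping.keys e. Poly_Mapping.lookup e i when i + s = j)"
    by (simp add: shift_exps_def lookup_sum lookup_single)
  also have "\<dots> = (if s \<le> j then Poly_Mapping.lookup e (j - s) else 0)"
  proof (cases "s \<le> j \<and> j - s \<in> Poly_Mapping.keys e")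
    case True
    then show ?thesis
      by (subst sum.remove[of _ "j - s"]) (auto simp: when_def split: if_splits intro!: sum.neutral)
  next
    case False
    then show ?thesis
      by (auto simp: when_def in_keys_iff intro!: sum.neutral)
  qed
  finally show ?thesis .
qed

lemma shift_exps_zero [simp]: "shift_exps s 0 = 0"
  by (simp add: shift_exps_def)

lemma shift_exps_add: "shift_exps s (e + e') = shift_exps s e + shift_exps s e'"
  by (rule poly_mapping_eqI) (simp add: lookup_shift_exps lookup_add)

lemma keys_shift_exps: "Poly_Mapping.keys (shift_exps s e) = (\<lambda>i. i + s) ` Poly_Mapping.keys e"
proof (intro set_eqI iffI)
  fix j assume "j \<in> Poly_Mapping.keys (shift_exps s e)"
  then have "s \<le> j" "j - s \<in> Poly_Mapping.keys e"
    by (auto simp: in_keys_iff lookup_shift_exps split: if_splits)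
  then show "j \<in> (\<lambda>i. i + s) ` Poly_Mapping.keys e"
    by (metis image_eqI le_add_diff_inverse2)
qed (auto simp: in_keys_iff lookup_shift_exps)

lemma monom_eval_shift_exps: "monom_eval (shift_exps s e) x = monom_eval e (\<lambda>i. x (i + s))"
  unfolding monom_eval_def keys_shift_exps
  by (subst prod.reindex) (auto simp: lookup_shift_exps)

definition lpshift :: "nat \<Rightarrow> 'a::field lpoly \<Rightarrow> 'a lpoly" where
  "lpshift s f = (\<Sum>e\<in>Poly_Mapping.keys f. Poly_Mapping.single (shift_exps s e) (Poly_Mapping.lookup f e))"

lemma lpshift_superset:
  assumes "finite A" "Poly_Mapping.keys f \<subseteq> A"
  shows "lpshift s f = (\<Sum>e\<in>A. Poly_Mapping.single (shift_exps s e) (Poly_Mapping.lookup f e))"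
  unfolding lpshift_def
  by (rule sum.mono_neutral_left) (use assms in \<open>auto simp: in_keys_iff\<close>)

lemma lpshift_add: "lpshift s (f + g) = lpshift s f + lpshift s g"
proof -
  let ?A = "Poly_Mapping.keys f \<union> Poly_Mapping.keys g"
  have "lpshift s (f + g) = (\<Sum>e\<in>?A. Poly_Mapping.single (shift_exps s e) (Poly_Mapping.lookup (f + g) e))"
    by (rule lpshift_superset) (auto dest: keys_add[THEN subsetD])
  then show ?thesis
    by (simp add: lookup_add single_add sum.distrib lpshift_superset[of ?A])
qed

lemma lpshift_zero [simp]: "lpshift s 0 = 0"
  by (simp add: lpshift_def)

lemma lpshift_sum: "lpshift s (sum g I) = (\<Sum>i\<in>I. lpshift s (g i))"
  by (induction I rule: infinite_finite_induct) (auto simp: lpshift_add)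

lemma lpshift_single: "lpshift s (Poly_Mapping.single e c) = Poly_Mapping.single (shift_exps s e) c"
  by (simp add: lpshift_def)

lemma lpshift_mult: "lpshift s (f * g) = lpshift s f * lpshift s g"
proof -
  have "lpshift s f * lpshift s g =
      (\<Sum>e\<in>Poly_Mapping.keys f. Poly_Mapping.single (shift_exps s e) (Poly_Mapping.lookup f e)) *
      (\<Sum>e\<in>Poly_Mapping.keys g. Poly_Mapping.single (shift_exps s e) (Poly_Mapping.lookup g e))"
    by (simp add: lpshift_def)
  also have "\<dots> = lpshift s (f * g)"
    unfolding mult_eq_sum_single[of f g]
    by (simp add: sum_product mult_single lpshift_sum lpshift_single shift_exps_add)
  finally show ?thesis ..
qed

lemma lpshift_one [simp]: "lpshift s 1 = 1"
  by (simp add: lpshift_def)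

lemma lpeval_lpshift: "lpeval (lpshift s f) x = lpeval f (\<lambda>i. x (i + s))"
  unfolding lpshift_def lpeval_sum lpeval_single monom_eval_shift_exps
  by (simp add: lpeval_eq_sum_monom_eval)

lemma in_vars_lpshift: "in_vars k f \<Longrightarrow> in_vars (s + k) (lpshift s f)"
proof -
  assume f: "in_vars k f"
  have "Poly_Mapping.keys (lpshift s f) \<subseteq> shift_exps s ` Poly_Mapping.keys f"
    unfolding lpshift_def by (rule order_trans[OF keys_sum]) auto
  with f show ?thesis
    unfolding in_vars_def by (fastforce simp: keys_shift_exps)
qed

definition torus_unit :: "nat \<Rightarrow> 'a::field lpoly \<Rightarrow> bool" where
  "torus_unit k f \<longleftrightarrow> in_vars k f \<and> (\<exists>g. in_vars k g \<and> f * g = 1)"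

lemma torus_endo_iff_torus_unit: "torus_endo k \<Phi> \<longleftrightarrow> (\<forall>i<k. torus_unit k (\<Phi> i))"
  by (simp add: torus_endo_def torus_unit_def)

lemma torus_unit_mono: "torus_unit k f \<Longrightarrow> k \<le> k' \<Longrightarrow> torus_unit k' f"
  unfolding torus_unit_def by (meson in_vars_mono)

lemma torus_unit_lpshift: "torus_unit k f \<Longrightarrow> torus_unit (s + k) (lpshift s f)"
  unfolding torus_unit_def by (metis in_vars_lpshift lpshift_mult lpshift_one)

lemma torus_unit_lpvar: "i < k \<Longrightarrow> torus_unit k (lpvar i)"
  unfolding torus_unit_def
proof (intro conjI exI)
  show "lpvar i * Poly_Mapping.single (Poly_Mapping.single i (-1)) 1 = 1"
    by (simp add: lpvar_def mult_single flip: single_add)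
qed (auto simp: in_vars_def lpvar_def)

lemma lpeval_mult_torus_points:
  assumes "x \<in> torus_points k" "in_vars k f" "in_vars k g"
  shows "lpeval (f * g) x = lpeval f x * lpeval g x"
proof -
  define x' where "x' = (\<lambda>i. if i < k then x i else 1)"
  have agree: "\<forall>i<k. x i = x' i"
    by (simp add: x'_def)
  have "lpeval (f * g) x = lpeval (f * g) x'"
    by (rule lpeval_cong_in_vars[OF in_vars_mult[OF assms(2,3)] agree])
  also have "\<dots> = lpeval f x' * lpeval g x'"
    by (rule lpeval_mult) (use assms(1) in \<open>auto simp: x'_def torus_points_def\<close>)
  finally show ?thesis
    using lpeval_cong_in_vars[OF assms(2) agree] lpeval_cong_in_vars[OF assms(3) agree] by simp
qed

lemma lpeval_torus_unit_nonzero: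
  assumes "torus_unit k f" "x \<in> torus_points k"
  shows "lpeval f x \<noteq> 0"
proof -
  obtain g where "in_vars k f" "in_vars k g" "f * g = 1"
    using assms(1) unfolding torus_unit_def by blast
  then have "lpeval f x * lpeval g x = 1"
    using lpeval_mult_torus_points[OF assms(2)] by (metis lpeval_one)
  then show ?thesis by auto
qed

lemma endo_map_torus_points:
  "torus_endo k \<Phi> \<Longrightarrow> x \<in> torus_points k \<Longrightarrow> endo_map k \<Phi> x \<in> torus_points k"
  using lpeval_torus_unit_nonzero[of k _ x]
  by (auto simp: torus_points_def endo_map_def torus_endo_iff_torus_unit)

lemma funpow_endo_map_torus_points:
  "torus_endo k \<Phi> \<Longrightarrow> x \<in> torus_points k \<Longrightarrow> (endo_map k \<Phi> ^^ n) x \<in> torus_points k"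
  by (induction n) (auto simp: endo_map_torus_points)

lemma DML_set_torusE:
  fixes K :: "'a::field itself"
  assumes "DML_set_torus K k S"
  obtains \<Phi> :: "nat \<Rightarrow> 'a lpoly" and \<alpha> F where "torus_endo k \<Phi>" "\<alpha> \<in> torus_points k"
    "finite F" "\<forall>f\<in>F. in_vars k f" "S = {n. (endo_map k \<Phi> ^^ n) \<alpha> \<in> zero_set k F}"
  using assms unfolding DML_set_torus_def by blast

lemma DML_set_torusI:
  fixes K :: "'a::field itself" and \<Phi> :: "nat \<Rightarrow> 'a lpoly"
  assumes "torus_endo k \<Phi>" "\<alpha> \<in> torus_points k" "finite F" "\<forall>f\<in>F. in_vars k f"
    and "S = {n. (endo_map k \<Phi> ^^ n) \<alpha> \<in> zero_set k F}"
  shows "DML_set_torus K k S"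
  using assms unfolding DML_set_torus_def by blast

definition join_points :: "nat \<Rightarrow> (nat \<Rightarrow> 'a) \<Rightarrow> (nat \<Rightarrow> 'a) \<Rightarrow> nat \<Rightarrow> 'a" where
  "join_points k x y = (\<lambda>i. if i < k then x i else y (i - k))"

definition join_endo :: "nat \<Rightarrow> (nat \<Rightarrow> 'a::field lpoly) \<Rightarrow> (nat \<Rightarrow> 'a lpoly) \<Rightarrow> nat \<Rightarrow> 'a lpoly" where
  "join_endo k \<Phi> \<Psi> = (\<lambda>i. if i < k then \<Phi> i else lpshift k (\<Psi> (i - k)))"

lemma join_points_torus_points:
  "x \<in> torus_points k \<Longrightarrow> y \<in> torus_points l \<Longrightarrow> join_points k x y \<in> torus_points (k + l)"
  by (auto simp: torus_points_def join_points_def)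

lemma lpeval_join_points_left: "in_vars k f \<Longrightarrow> lpeval f (join_points k x y) = lpeval f x"
  by (rule lpeval_cong_in_vars) (auto simp: join_points_def)

lemma lpeval_join_points_right: "lpeval (lpshift k f) (join_points k x y) = lpeval f y"
  by (simp add: lpeval_lpshift join_points_def)

lemma torus_endo_join_endo:
  assumes "torus_endo k \<Phi>" "torus_endo l \<Psi>"
  shows "torus_endo (k + l) (join_endo k \<Phi> \<Psi>)"
  unfolding torus_endo_iff_torus_unit
proof (intro allI impI)
  fix i assume i: "i < k + l"
  show "torus_unit (k + l) (join_endo k \<Phi> \<Psi> i)"
  proof (cases "i < k")
    case True
    then have "torus_unit k (\<Phi> i)"
      using assms(1) by (simp add: torus_endo_iff_torus_unit)
    then show ?thesis
      using True by (auto simp: join_endo_def intro: torus_unit_mono)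
  next
    case False
    then have "torus_unit l (\<Psi> (i - k))"
      using assms(2) i by (simp add: torus_endo_iff_torus_unit)
    then show ?thesis
      using False by (simp add: join_endo_def torus_unit_lpshift)
  qed
qed

lemma endo_map_join_points:
  assumes "torus_endo k \<Phi>"
  shows "endo_map (k + l) (join_endo k \<Phi> \<Psi>) (join_points k x y) =
    join_points k (endo_map k \<Phi> x) (endo_map l \<Psi> y)"
proof
  fix i
  have "in_vars k (\<Phi> i)" if "i < k"
    using assms that by (simp add: torus_endo_def)
  then show "endo_map (k + l) (join_endo k \<Phi> \<Psi>) (join_points k x y) i =
      join_points k (endo_map k \<Phi> x) (endo_map l \<Psi> y) i"
    by (simp add: endo_map_def join_endo_def lpeval_join_points_left lpeval_join_points_right)
      (auto simp: join_points_def)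
qed

lemma funpow_endo_map_join_points:
  assumes "torus_endo k \<Phi>"
  shows "(endo_map (k + l) (join_endo k \<Phi> \<Psi>) ^^ n) (join_points k x y) =
    join_points k ((endo_map k \<Phi> ^^ n) x) ((endo_map l \<Psi> ^^ n) y)"
  by (induction n) (simp_all add: endo_map_join_points[OF assms])

lemma join_points_in_zero_set_products:
  assumes "x \<in> torus_points k" "y \<in> torus_points l"
    and "\<forall>f\<in>F. in_vars k f" "\<forall>g\<in>G. in_vars l g"
  shows "join_points k x y \<in> zero_set (k + l) ((\<lambda>(f, g). f * lpshift k g) ` (F \<times> G)) \<longleftrightarrow>
    x \<in> zero_set k F \<or> y \<in> zero_set l G"
proof -
  have xy: "join_points k x y \<in> torus_points (k + l)"
    using assms(1,2) by (rule join_points_torus_points)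
  have "lpeval (f * lpshift k g) (join_points k x y) = lpeval f x * lpeval g y"
    if "f \<in> F" "g \<in> G" for f g
  proof -
    have "in_vars (k + l) f" "in_vars (k + l) (lpshift k g)"
      using that assms(3,4) in_vars_mono[of k f] in_vars_lpshift[of l g k] by auto
    then show ?thesis
      using lpeval_mult_torus_points[OF xy] that assms(3)
      by (simp add: lpeval_join_points_left lpeval_join_points_right)
  qed
  then have "join_points k x y \<in> zero_set (k + l) ((\<lambda>(f, g). f * lpshift k g) ` (F \<times> G)) \<longleftrightarrow>
      (\<forall>f\<in>F. \<forall>g\<in>G. lpeval f x * lpeval g y = 0)"
    using xy by (auto simp: zero_set_def)
  also have "\<dots> \<longleftrightarrow> (\<forall>f\<in>F. lpeval f x = 0) \<or> (\<forall>g\<in>G. lpeval g y = 0)"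
    by auto
  finally show ?thesis
    using assms(1,2) by (simp add: zero_set_def)
qed

lemma DML_set_torus_Un:
  fixes K :: "'a::field itself"
  assumes "DML_set_torus K k S" "DML_set_torus K l T"
  shows "DML_set_torus K (k + l) (S \<union> T)"
proof -
  obtain \<Phi> :: "nat \<Rightarrow> 'a lpoly" and \<alpha> F where S: "torus_endo k \<Phi>" "\<alpha> \<in> torus_points k"
    "finite F" "\<forall>f\<in>F. in_vars k f" "S = {n. (endo_map k \<Phi> ^^ n) \<alpha> \<in> zero_set k F}"
    using assms(1) by (rule DML_set_torusE)
  obtain \<Psi> :: "nat \<Rightarrow> 'a lpoly" and \<beta> G where T: "torus_endo l \<Psi>" "\<beta> \<in> torus_points l"
    "finite G" "\<forall>g\<in>G. in_vars l g" "T = {n. (endo_map l \<Psi> ^^ n) \<beta> \<in> zero_set l G}"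
    using assms(2) by (rule DML_set_torusE)
  let ?H = "(\<lambda>(f, g). f * lpshift k g) ` (F \<times> G)"
  have "(endo_map (k + l) (join_endo k \<Phi> \<Psi>) ^^ n) (join_points k \<alpha> \<beta>) \<in> zero_set (k + l) ?H \<longleftrightarrow>
      (endo_map k \<Phi> ^^ n) \<alpha> \<in> zero_set k F \<or> (endo_map l \<Psi> ^^ n) \<beta> \<in> zero_set l G" for n
    unfolding funpow_endo_map_join_points[OF S(1)]
    by (rule join_points_in_zero_set_products[OF funpow_endo_map_torus_points[OF S(1,2)]
          funpow_endo_map_torus_points[OF T(1,2)] S(4) T(4)])
  then have "S \<union> T = {n. (endo_map (k + l) (join_endo k \<Phi> \<Psi>) ^^ n) (join_points k \<alpha> \<beta>) \<in> zero_set (k + l) ?H}"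
    unfolding S(5) T(5) by auto
  moreover have "\<forall>h\<in>?H. in_vars (k + l) h"
  proof
    fix h assume "h \<in> ?H"
    then obtain f g where "f \<in> F" "g \<in> G" "h = f * lpshift k g"
      by auto
    then show "in_vars (k + l) h"
      using S(4) T(4) in_vars_mono[OF _ le_add1, of k f l] in_vars_lpshift[of l g k]
      by (simp add: in_vars_mult)
  qed
  ultimately show ?thesis
    using torus_endo_join_endo[OF S(1) T(1)] join_points_torus_points[OF S(2) T(2)] S(3) T(3)
    by (intro DML_set_torusI) auto
qed

definition blocks :: "nat \<Rightarrow> nat \<Rightarrow> (nat \<Rightarrow> nat \<Rightarrow> 'a::zero) \<Rightarrow> nat \<Rightarrow> 'a" where
  "blocks L w R = (\<lambda>v. if v < L * w then R (v div w) (v mod w) else 0)"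

lemma blocks_nth:
  assumes "i < w" "j < L"
  shows "blocks L w R (j * w + i) = R j i"
proof -
  have "j * w + i < Suc j * w"
    using assms(1) by simp
  also have "\<dots> \<le> L * w"
    using assms(2) by (intro mult_right_mono) auto
  finally show ?thesis
    using assms(1) by (simp add: blocks_def)
qed

lemma blocks_cong: "(\<And>j. j < L \<Longrightarrow> R j = R' j) \<Longrightarrow> blocks L w R = blocks L w R'"
  by (auto simp: blocks_def less_mult_imp_div_less)

lemma blocks_torus_points:
  assumes "\<And>j. j < L \<Longrightarrow> R j \<in> torus_points w"
  shows "blocks L w R \<in> torus_points (L * w)"
proof -
  have "R (v div w) (v mod w) \<noteq> 0" if "v < L * w" for v
  proof -
    have "0 < w" "v div w < L"
      using that by (cases w, simp_all add: less_mult_imp_div_less)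
    then show ?thesis
      using assms[of "v div w"] by (simp add: torus_points_def)
  qed
  then show ?thesis
    by (simp add: torus_points_def blocks_def)
qed

lemma lpeval_lpshift_blocks:
  assumes "in_vars w f" "j < L"
  shows "lpeval (lpshift (j * w) f) (blocks L w R) = lpeval f (R j)"
  unfolding lpeval_lpshift
  by (rule lpeval_cong_in_vars[OF assms(1)]) (use assms(2) in \<open>simp add: add.commute[of _ "j * w"] blocks_nth\<close>)

definition register_endo :: "nat \<Rightarrow> nat \<Rightarrow> (nat \<Rightarrow> 'a::field lpoly) \<Rightarrow> nat \<Rightarrow> 'a lpoly" where
  "register_endo w r \<Phi> = (\<lambda>v. if v < w then lpshift (r * w) (\<Phi> v) else lpvar (v - w))"

lemma torus_endo_register_endo:
  assumes "torus_endo w \<Phi>" "r < L"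
  shows "torus_endo (L * w) (register_endo w r \<Phi>)"
  unfolding torus_endo_iff_torus_unit
proof (intro allI impI)
  fix v assume v: "v < L * w"
  show "torus_unit (L * w) (register_endo w r \<Phi> v)"
  proof (cases "v < w")
    case True
    have "r * w + w \<le> L * w"
      using assms(2) mult_le_mono1[of "Suc r" L w] by simp
    moreover have "torus_unit (r * w + w) (lpshift (r * w) (\<Phi> v))"
      using assms(1) True by (simp add: torus_endo_iff_torus_unit torus_unit_lpshift)
    ultimately show ?thesis
      using True by (simp add: register_endo_def torus_unit_mono)
  next
    case False
    then show ?thesis
      using v by (simp add: register_endo_def torus_unit_lpvar)
  qed
qed

lemma endo_map_register_endo:
  assumes "torus_endo w \<Phi>" "r < L"
  shows "endo_map (L * w) (register_endo w r \<Phi>) (blocks L w R) =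
    blocks L w (\<lambda>j. if j = 0 then endo_map w \<Phi> (R r) else R (j - 1))"
proof
  fix v
  show "endo_map (L * w) (register_endo w r \<Phi>) (blocks L w R) v =
    blocks L w (\<lambda>j. if j = 0 then endo_map w \<Phi> (R r) else R (j - 1)) v"
  proof (cases "v < w")
    case True
    have "w \<le> L * w"
      using assms(2) by simp
    moreover have "in_vars w (\<Phi> v)"
      using assms(1) True by (simp add: torus_endo_def)
    then have "lpeval (lpshift (r * w) (\<Phi> v)) (blocks L w R) = lpeval (\<Phi> v) (R r)"
      using assms(2) by (rule lpeval_lpshift_blocks)
    ultimately show ?thesis
      using True by (simp add: endo_map_def register_endo_def) (simp add: blocks_def endo_map_def)
  next
    case False
    then obtain u where u: "v = u + w"
      by (metis add.commute le_add_diff_inverse not_less)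
    then show ?thesis
      by (cases "w = 0") (simp_all add: endo_map_def register_endo_def blocks_def)
  qed
qed

lemma funpow_endo_map_register_endo:
  assumes "torus_endo w \<Phi>" "r < L"
    and step: "\<And>n j. j < L \<Longrightarrow> R (Suc n) j = (if j = 0 then endo_map w \<Phi> (R n r) else R n (j - 1))"
  shows "(endo_map (L * w) (register_endo w r \<Phi>) ^^ n) (blocks L w (R 0)) = blocks L w (R n)"
proof (induction n)
  case (Suc n)
  then show ?case
    using blocks_cong[of L "R (Suc n)", OF step]
    by (simp add: endo_map_register_endo[OF assms(1,2)])
qed simp

definition flag_endo :: "nat \<Rightarrow> (nat \<Rightarrow> 'a::field lpoly) \<Rightarrow> nat \<Rightarrow> 'a lpoly" where
  "flag_endo k \<Phi> = (\<lambda>i. if i < k then \<Phi> i else lpvar k)"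

definition flag_point :: "nat \<Rightarrow> (nat \<Rightarrow> 'a::zero) \<Rightarrow> 'a \<Rightarrow> nat \<Rightarrow> 'a" where
  "flag_point k x y = (\<lambda>i. if i < k then x i else if i = k then y else 0)"

lemma flag_point_torus_points:
  "x \<in> torus_points k \<Longrightarrow> y \<noteq> 0 \<Longrightarrow> flag_point k x y \<in> torus_points (Suc k)"
  by (auto simp: torus_points_def flag_point_def less_Suc_eq)

lemma lpeval_flag_point: "in_vars k f \<Longrightarrow> lpeval f (flag_point k x y) = lpeval f x"
  by (rule lpeval_cong_in_vars) (auto simp: flag_point_def)

lemma torus_endo_flag_endo: "torus_endo k \<Phi> \<Longrightarrow> torus_endo (Suc k) (flag_endo k \<Phi>)"
  by (auto simp: torus_endo_iff_torus_unit flag_endo_def torus_unit_lpvar less_Suc_eq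
      intro: torus_unit_mono)

lemma endo_map_flag_point:
  assumes "torus_endo k \<Phi>"
  shows "endo_map (Suc k) (flag_endo k \<Phi>) (flag_point k x y) = flag_point k (endo_map k \<Phi> x) y"
proof
  fix i
  have "in_vars k (\<Phi> i)" if "i < k"
    using assms that by (simp add: torus_endo_def)
  then show "endo_map (Suc k) (flag_endo k \<Phi>) (flag_point k x y) i = flag_point k (endo_map k \<Phi> x) y i"
    by (simp add: endo_map_def flag_endo_def lpeval_flag_point) (simp add: flag_point_def)
qed

lemma Suc_div_register_feedback:
  fixes a n :: nat
  assumes "a \<ge> 1"
  shows "Suc ((n - (a - 1) + a - 1) div a) = (Suc n + a - 1) div a"
proof (cases "a - 1 \<le> n")
  case True
  then show ?thesis
    using assms by (simp add: div_add_self2)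
next
  case False
  then show ?thesis
    using assms by (simp add: div_if)
qed

lemma dvd_Suc_iff_register_feedback:
  fixes a n :: nat
  assumes "a \<ge> 1"
  shows "a dvd Suc n \<longleftrightarrow> a - 1 \<le> n \<and> a dvd (n - (a - 1))"
proof (cases "a - 1 \<le> n")
  case True
  then have "Suc n = (n - (a - 1)) + a"
    using assms by simp
  then show ?thesis
    using True by (metis dvd_add_left_iff dvd_refl)
next
  case False
  then show ?thesis
    by (auto dest: dvd_imp_le)
qed

lemma dvd_imp_add_pred_div_eq:
  fixes a m :: nat
  assumes "a dvd m"
  shows "(m + a - 1) div a = m div a"
proof (cases "a = 0")
  case False
  obtain k where "m = a * k"
    using assms by blast
  moreover have "(a * k + a - 1) div a = k"
    using False by (intro div_nat_eqI) auto
  ultimately show ?thesis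
    using False by simp
qed simp

lemma mem_affine_image_iff:
  fixes a b :: nat
  assumes "a \<ge> 1"
  shows "n \<in> (\<lambda>m. a * m + b) ` S \<longleftrightarrow> b \<le> n \<and> a dvd (n - b) \<and> (n - b) div a \<in> S"
proof
  assume "b \<le> n \<and> a dvd (n - b) \<and> (n - b) div a \<in> S"
  then have "n = a * ((n - b) div a) + b" "(n - b) div a \<in> S"
    by auto
  then show "n \<in> (\<lambda>m. a * m + b) ` S"
    by (rule image_eqI)
qed (use assms in auto)

lemma in_vars_lpshift_blocks:
  assumes "in_vars w f" "j < L"
  shows "in_vars (L * w) (lpshift (j * w) f)"
proof -
  have "j * w + w \<le> L * w"
    using assms(2) mult_le_mono1[of "Suc j" L w] by simp
  then show ?thesis
    using in_vars_lpshift[OF assms(1), of "j * w"] in_vars_mono by blast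
qed

text \<open>The orbit of \<alpha> is replayed in a shift register of blocks, block j lagging j steps
  behind block 0, with a feedback from block a - 1 so that the orbit advances only once
  every a steps. The flag coordinate k of block j is 1 exactly when the time n - j elapsed
  in that block is a multiple of a, and c otherwise.\<close>
locale register_orbit =
  fixes k :: nat and \<Phi> :: "nat \<Rightarrow> 'a::field lpoly" and \<alpha> :: "nat \<Rightarrow> 'a" and a :: nat and c :: 'a
  assumes endo: "torus_endo k \<Phi>" and start: "\<alpha> \<in> torus_points k" and a: "a \<ge> 1" and c: "c \<noteq> 0"
begin

definition orbit :: "nat \<Rightarrow> nat \<Rightarrow> 'a" where
  "orbit m = (endo_map k \<Phi> ^^ m) \<alpha>"

definition state :: "nat \<Rightarrow> nat \<Rightarrow> nat \<Rightarrow> 'a" where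
  "state n j = flag_point k (orbit ((n - j + a - 1) div a)) (if j \<le> n \<and> a dvd (n - j) then 1 else c)"

lemma orbit_torus_points: "orbit m \<in> torus_points k"
  unfolding orbit_def using endo start by (rule funpow_endo_map_torus_points)

lemma blocks_state_torus_points: "blocks L (Suc k) (state n) \<in> torus_points (L * Suc k)"
  using orbit_torus_points c by (intro blocks_torus_points) (simp add: state_def flag_point_torus_points)

lemma state_Suc:
  "state (Suc n) j = (if j = 0 then endo_map (Suc k) (flag_endo k \<Phi>) (state n (a - 1)) else state n (j - 1))"
proof (cases "j = 0")
  case True
  have "state (Suc n) 0 = flag_point k (orbit ((Suc n + a - 1) div a)) (if a dvd Suc n then 1 else c)"
    by (simp add: state_def)
  also have "\<dots> = flag_point k (orbit (Suc ((n - (a - 1) + a - 1) div a)))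
      (if a - 1 \<le> n \<and> a dvd (n - (a - 1)) then 1 else c)"
    unfolding Suc_div_register_feedback[OF a] dvd_Suc_iff_register_feedback[OF a] ..
  also have "\<dots> = endo_map (Suc k) (flag_endo k \<Phi>) (state n (a - 1))"
    unfolding state_def endo_map_flag_point[OF endo] orbit_def funpow.simps o_apply ..
  finally show ?thesis
    using True by simp
next
  case False
  then have "Suc n - j = n - (j - 1)" "j \<le> Suc n \<longleftrightarrow> j - 1 \<le> n"
    by auto
  then show ?thesis
    using False by (simp add: state_def)
qed

lemma funpow_register_endo_state:
  "(endo_map ((a + b) * Suc k) (register_endo (Suc k) (a - 1) (flag_endo k \<Phi>)) ^^ n)
     (blocks (a + b) (Suc k) (state 0)) = blocks (a + b) (Suc k) (state n)"
  using torus_endo_flag_endo[OF endo] a state_Suc by (intro funpow_endo_map_register_endo) auto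

lemma blocks_state_in_zero_set_iff:
  assumes "\<forall>f\<in>F. in_vars k f" "c \<noteq> 1"
  shows "blocks (a + b) (Suc k) (state n) \<in>
      zero_set ((a + b) * Suc k) (lpshift (b * Suc k) ` F \<union> {lpshift (b * Suc k) (lpvar k) - 1}) \<longleftrightarrow>
    b \<le> n \<and> a dvd (n - b) \<and> orbit ((n - b) div a) \<in> zero_set k F"
proof -
  have b: "b < a + b"
    using a by simp
  have "lpeval (lpshift (b * Suc k) f) (blocks (a + b) (Suc k) (state n)) =
      lpeval f (orbit ((n - b + a - 1) div a))" if "f \<in> F" for f
  proof -
    have f: "in_vars k f"
      using assms(1) that by blast
    then have "in_vars (Suc k) f"
      by (rule in_vars_mono) simp
    then have "lpeval (lpshift (b * Suc k) f) (blocks (a + b) (Suc k) (state n)) = lpeval f (state n b)"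
      using b by (rule lpeval_lpshift_blocks)
    then show ?thesis
      using f by (simp add: state_def lpeval_flag_point)
  qed
  moreover have "lpeval (lpshift (b * Suc k) (lpvar k)) (blocks (a + b) (Suc k) (state n)) =
      (if b \<le> n \<and> a dvd (n - b) then 1 else c)"
    unfolding lpeval_lpshift_blocks[OF in_vars_lpvar[OF lessI] b] by (simp add: state_def flag_point_def)
  ultimately have "blocks (a + b) (Suc k) (state n) \<in>
      zero_set ((a + b) * Suc k) (lpshift (b * Suc k) ` F \<union> {lpshift (b * Suc k) (lpvar k) - 1}) \<longleftrightarrow>
      (b \<le> n \<and> a dvd (n - b)) \<and> (\<forall>f\<in>F. lpeval f (orbit ((n - b + a - 1) div a)) = 0)"
    using blocks_state_torus_points assms(2) by (auto simp: zero_set_def lpeval_diff)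
  then show ?thesis
    using orbit_torus_points dvd_imp_add_pred_div_eq[of a "n - b"] by (auto simp: zero_set_def)
qed

end

lemma DML_set_torus_affine_image:
  fixes K :: "'a::field itself" and c :: 'a
  assumes "DML_set_torus K k S" "a \<ge> 1" "c \<noteq> 0" "c \<noteq> 1"
  shows "DML_set_torus K ((a + b) * Suc k) ((\<lambda>n. a * n + b) ` S)"
proof -
  obtain \<Phi> :: "nat \<Rightarrow> 'a lpoly" and \<alpha> F where S: "torus_endo k \<Phi>" "\<alpha> \<in> torus_points k"
    "finite F" "\<forall>f\<in>F. in_vars k f" "S = {n. (endo_map k \<Phi> ^^ n) \<alpha> \<in> zero_set k F}"
    using assms(1) by (rule DML_set_torusE)
  interpret register_orbit k \<Phi> \<alpha> a c
    using S(1,2) assms(2,3) by unfold_locales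
  let ?G = "lpshift (b * Suc k) ` F \<union> {lpshift (b * Suc k) (lpvar k) - 1}"
  show ?thesis
  proof (rule DML_set_torusI)
    show "torus_endo ((a + b) * Suc k) (register_endo (Suc k) (a - 1) (flag_endo k \<Phi>))"
      using torus_endo_flag_endo[OF S(1)] by (rule torus_endo_register_endo) (use assms(2) in simp)
    show "finite ?G"
      using S(3) by simp
    have b: "b < a + b"
      using assms(2) by simp
    have "in_vars (Suc k) f" if "f \<in> F" for f
      using S(4) that in_vars_mono[of k f "Suc k"] by simp
    then have "in_vars ((a + b) * Suc k) (lpshift (b * Suc k) f)" if "f \<in> F" for f
      using that b by (blast intro: in_vars_lpshift_blocks)
    moreover have "in_vars ((a + b) * Suc k) (lpshift (b * Suc k) (lpvar k))"
      using in_vars_lpvar[OF lessI] b by (rule in_vars_lpshift_blocks)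
    ultimately show "\<forall>g\<in>?G. in_vars ((a + b) * Suc k) g"
      by (auto intro: in_vars_diff in_vars_one)
    show "(\<lambda>n. a * n + b) ` S = {n. (endo_map ((a + b) * Suc k) (register_endo (Suc k) (a - 1) (flag_endo k \<Phi>)) ^^ n)
        (blocks (a + b) (Suc k) (state 0)) \<in> zero_set ((a + b) * Suc k) ?G}"
      unfolding funpow_register_endo_state blocks_state_in_zero_set_iff[OF S(4) assms(4)]
      by (rule set_eqI) (simp add: mem_affine_image_iff[OF assms(2)] S(5) orbit_def)
  qed (rule blocks_state_torus_points)
qed

lemma DML_split_torus_Un:
  assumes "DML_split_torus K S" "DML_split_torus K T"
  shows "DML_split_torus K (S \<union> T)"
proof -
  obtain k l where "k \<ge> 1" "DML_set_torus K k S" "DML_set_torus K l T"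
    using assms unfolding DML_split_torus_def by blast
  then have "k + l \<ge> 1" "DML_set_torus K (k + l) (S \<union> T)"
    by (simp_all add: DML_set_torus_Un)
  then show ?thesis
    unfolding DML_split_torus_def by blast
qed

lemma DML_split_torus_empty: "DML_split_torus (K :: 'a::field itself) {}"
proof -
  let ?\<alpha> = "\<lambda>i. if i < 1 then 1 else 0 :: 'a"
  have "DML_set_torus K 1 {}"
  proof (rule DML_set_torusI)
    show "torus_endo 1 (lpvar :: nat \<Rightarrow> 'a lpoly)"
      by (simp add: torus_endo_iff_torus_unit torus_unit_lpvar)
    show "?\<alpha> \<in> torus_points 1"
      by (simp add: torus_points_def)
    show "{} = {n. (endo_map 1 lpvar ^^ n) ?\<alpha> \<in> zero_set 1 {1}}"
      by (simp add: zero_set_def)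
  qed (simp_all add: in_vars_one)
  then show ?thesis
    unfolding DML_split_torus_def by blast
qed

lemma DML_split_torus_UN:
  fixes K :: "'a::field itself"
  assumes "finite I" "\<And>i. i \<in> I \<Longrightarrow> DML_split_torus K (A i)"
  shows "DML_split_torus K (\<Union>i\<in>I. A i)"
  using assms by (induction I rule: finite_induct) (simp_all add: DML_split_torus_empty DML_split_torus_Un)

lemma DML_split_torus_affine_image:
  fixes K :: "'a::field itself"
  assumes "DML_split_torus K S" "a \<ge> 1" "\<exists>c::'a. c \<noteq> 0 \<and> c \<noteq> 1"
  shows "DML_split_torus K ((\<lambda>n. a * n + b) ` S)"
proof -
  obtain k where "DML_set_torus K k S"
    using assms(1) unfolding DML_split_torus_def by blast
  then have "DML_set_torus K ((a + b) * Suc k) ((\<lambda>n. a * n + b) ` S)"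
    using assms(2,3) DML_set_torus_affine_image by blast
  moreover have "(a + b) * Suc k \<ge> 1"
    using assms(2) by simp
  ultimately show ?thesis
    unfolding DML_split_torus_def by blast
qed

lemma Bset_iff: "x \<in> Bset q l \<longleftrightarrow> (\<exists>n. x = (\<Sum>j<length l. l ! j * q ^ n j))"
  by (auto simp: Bset_def)

lemma sum_take_append:
  assumes "length c = Suc m"
  shows "(\<Sum>j<length (take m c @ [x]). (take m c @ [x]) ! j * q ^ n j) =
    (\<Sum>j<m. c ! j * q ^ n j) + x * q ^ n m"
proof -
  have "(\<Sum>j<m. (take m c @ [x]) ! j * q ^ n j) = (\<Sum>j<m. c ! j * q ^ n j)"
    by (rule sum.cong) (use assms in \<open>auto simp: nth_append\<close>)
  then show ?thesis
    using assms by (simp add: nth_append)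
qed

lemma sum_take_update:
  assumes "length c = Suc m" "i < m"
  shows "(\<Sum>j<length ((take m c)[i := x]). (take m c)[i := x] ! j * q ^ n j) =
    x * q ^ n i + (\<Sum>j\<in>{..<m} - {i}. c ! j * q ^ n j)"
proof -
  have "(\<Sum>j<m. (take m c)[i := x] ! j * q ^ n j) =
      (take m c)[i := x] ! i * q ^ n i + (\<Sum>j\<in>{..<m} - {i}. (take m c)[i := x] ! j * q ^ n j)"
    using assms(2) by (subst sum.remove[of _ i]) auto
  also have "(\<Sum>j\<in>{..<m} - {i}. (take m c)[i := x] ! j * q ^ n j) = (\<Sum>j\<in>{..<m} - {i}. c ! j * q ^ n j)"
    by (rule sum.cong) (use assms in auto)
  finally show ?thesis
    using assms by simp
qed

lemma sum_zero_exponent_mem_plus_Bset_update: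
  assumes "length c = Suc m" "i < m" "n i = 0"
  shows "(\<Sum>j<m. c ! j * q ^ n j) + q * c ! m * q ^ n m \<in>
    (\<lambda>y. y + c ! i) ` Bset q ((take m c)[i := q * c ! m])"
proof -
  define n' where "n' = n(i := n m)"
  have "(\<Sum>j<m. c ! j * q ^ n j) = c ! i + (\<Sum>j\<in>{..<m} - {i}. c ! j * q ^ n j)"
    using assms(2,3) by (subst sum.remove[of _ i]) auto
  also have "(\<Sum>j\<in>{..<m} - {i}. c ! j * q ^ n j) = (\<Sum>j\<in>{..<m} - {i}. c ! j * q ^ n' j)"
    by (rule sum.cong) (auto simp: n'_def)
  finally have "(\<Sum>j<m. c ! j * q ^ n j) + q * c ! m * q ^ n m =
      (\<Sum>j<length ((take m c)[i := q * c ! m]). (take m c)[i := q * c ! m] ! j * q ^ n' j) + c ! i"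
    unfolding sum_take_update[OF assms(1,2)] by (simp add: n'_def)
  moreover have "(\<Sum>j<length ((take m c)[i := q * c ! m]). (take m c)[i := q * c ! m] ! j * q ^ n' j)
      \<in> Bset q ((take m c)[i := q * c ! m])"
    unfolding Bset_iff by blast
  ultimately show ?thesis
    by (rule image_eqI)
qed

lemma sum_positive_exponents_mem_times_Bset:
  assumes "length c = Suc m" "\<forall>j<m. n j > 0"
  shows "(\<Sum>j<m. c ! j * q ^ n j) + q * c ! m * q ^ n m \<in> (\<lambda>y. q * y) ` Bset q c"
proof -
  define n' where "n' = (\<lambda>j. if j < m then n j - 1 else n m)"
  have "(\<Sum>j<m. c ! j * q ^ n j) = q * (\<Sum>j<m. c ! j * q ^ n' j)"
    unfolding sum_distrib_left
  proof (rule sum.cong)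
    fix j assume "j \<in> {..<m}"
    then have "n j = Suc (n' j)"
      using assms(2) by (auto simp: n'_def)
    then show "c ! j * q ^ n j = q * (c ! j * q ^ n' j)"
      by simp
  qed simp
  then have "(\<Sum>j<m. c ! j * q ^ n j) + q * c ! m * q ^ n m = q * (\<Sum>j<length c. c ! j * q ^ n' j)"
    unfolding assms(1) by (simp add: n'_def algebra_simps)
  moreover have "(\<Sum>j<length c. c ! j * q ^ n' j) \<in> Bset q c"
    unfolding Bset_iff by blast
  ultimately show ?thesis
    by (rule image_eqI)
qed

lemma Bset_scaled_last_subset:
  assumes "length c = Suc m"
  shows "Bset q (take m c @ [q * c ! m]) \<subseteq>
    (\<lambda>n. q * n) ` Bset q c \<union> (\<Union>i<m. (\<lambda>n. n + c ! i) ` Bset q ((take m c)[i := q * c ! m]))"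
proof
  fix x assume "x \<in> Bset q (take m c @ [q * c ! m])"
  then obtain n where x: "x = (\<Sum>j<m. c ! j * q ^ n j) + q * c ! m * q ^ n m"
    unfolding Bset_iff sum_take_append[OF assms] by blast
  show "x \<in> (\<lambda>n. q * n) ` Bset q c \<union> (\<Union>i<m. (\<lambda>n. n + c ! i) ` Bset q ((take m c)[i := q * c ! m]))"
  proof (cases "\<forall>j<m. n j > 0")
    case True
    then show ?thesis
      unfolding x using sum_positive_exponents_mem_times_Bset[OF assms] by blast
  next
    case False
    then obtain i where "i < m" "n i = 0"
      by blast
    then show ?thesis
      unfolding x using sum_zero_exponent_mem_plus_Bset_update[OF assms] by blast
  qed
qed

lemma times_Bset_subset_Bset_scaled_last:
  assumes "length c = Suc m"
  shows "(\<lambda>n. q * n) ` Bset q c \<subseteq> Bset q (take m c @ [q * c ! m])"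
proof
  fix x assume "x \<in> (\<lambda>n. q * n) ` Bset q c"
  then obtain y where "y \<in> Bset q c" "x = q * y"
    by blast
  then obtain n where "x = q * (\<Sum>j<length c. c ! j * q ^ n j)"
    unfolding Bset_iff by blast
  then have "x = q * ((\<Sum>j<m. c ! j * q ^ n j) + c ! m * q ^ n m)"
    using assms by simp
  then have "x = (\<Sum>j<m. c ! j * q ^ Suc (n j)) + q * c ! m * q ^ n m"
    by (simp add: sum_distrib_left algebra_simps)
  then show "x \<in> Bset q (take m c @ [q * c ! m])"
    unfolding Bset_iff sum_take_append[OF assms]
    by (intro exI[of _ "\<lambda>j. if j < m then Suc (n j) else n m"]) simp
qed

lemma plus_Bset_update_subset_Bset_scaled_last:
  assumes "length c = Suc m" "i < m"
  shows "(\<lambda>n. n + c ! i) ` Bset q ((take m c)[i := q * c ! m]) \<subseteq> Bset q (take m c @ [q * c ! m])"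
proof
  fix x assume "x \<in> (\<lambda>n. n + c ! i) ` Bset q ((take m c)[i := q * c ! m])"
  then obtain y where "y \<in> Bset q ((take m c)[i := q * c ! m])" "x = y + c ! i"
    by blast
  then obtain n where
    "x = (\<Sum>j<length ((take m c)[i := q * c ! m]). (take m c)[i := q * c ! m] ! j * q ^ n j) + c ! i"
    unfolding Bset_iff by blast
  then have x: "x = q * c ! m * q ^ n i + (\<Sum>j\<in>{..<m} - {i}. c ! j * q ^ n j) + c ! i"
    unfolding sum_take_update[OF assms] by simp
  define n' where "n' = (n(i := 0))(m := n i)"
  have "(\<Sum>j<m. c ! j * q ^ n' j) = c ! i + (\<Sum>j\<in>{..<m} - {i}. c ! j * q ^ n' j)"
    using assms(2) by (subst sum.remove[of _ i]) (auto simp: n'_def)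
  also have "(\<Sum>j\<in>{..<m} - {i}. c ! j * q ^ n' j) = (\<Sum>j\<in>{..<m} - {i}. c ! j * q ^ n j)"
    by (rule sum.cong) (auto simp: n'_def)
  finally have "x = (\<Sum>j<m. c ! j * q ^ n' j) + q * c ! m * q ^ n' m"
    unfolding x by (simp add: n'_def)
  then show "x \<in> Bset q (take m c @ [q * c ! m])"
    unfolding Bset_iff sum_take_append[OF assms(1)] by blast
qed

lemma Bset_scaled_last_eq:
  assumes "length c = Suc m"
  shows "Bset q (take m c @ [q * c ! m]) =
    (\<lambda>n. q * n) ` Bset q c \<union> (\<Union>i<m. (\<lambda>n. n + c ! i) ` Bset q ((take m c)[i := q * c ! m]))"
  using Bset_scaled_last_subset[OF assms] times_Bset_subset_Bset_scaled_last[OF assms]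
    plus_Bset_update_subset_Bset_scaled_last[OF assms]
  by blast

lemma fract_X_not_0_1: "Fract [:0, 1:] 1 \<noteq> (0 :: 'a::field poly fract) \<and> Fract [:0, 1:] 1 \<noteq> 1"
  by (simp add: Zero_fract_def One_fract_def eq_fract one_pCons)

theorem lemma3p4:
  fixes p q m0 :: nat and c :: "nat list"
  assumes "prime p"
    and "is_alg_closure_Fp TYPE('k::alg_closed_field) p"
    and "\<exists>e\<ge>1. q = p ^ e"
    and "m0 \<ge> 1"
    and "\<forall>k\<ge>1. \<forall>d. length d = m0 \<and> (\<forall>x\<in>set d. x \<ge> 1) \<longrightarrow>
           DML_split_torus TYPE('k poly fract) (Bset (p ^ k) d)"
    and "length c = m0 + 1" and "\<forall>x\<in>set c. x \<ge> 1"
    and "DML_split_torus TYPE('k poly fract) (Bset q c)"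
  shows "DML_split_torus TYPE('k poly fract) (Bset q (take m0 c @ [q * c ! m0]))"
proof -
  obtain e where e: "e \<ge> 1" "q = p ^ e"
    using assms(3) by blast
  then have q: "q \<ge> 1"
    using prime_gt_0_nat[OF assms(1)] by simp
  have t: "\<exists>t :: 'k poly fract. t \<noteq> 0 \<and> t \<noteq> 1"
    using fract_X_not_0_1 by blast
  have "DML_split_torus TYPE('k poly fract) ((\<lambda>n. q * n) ` Bset q c)"
    using DML_split_torus_affine_image[OF assms(8) q t, of 0] by simp
  moreover have "DML_split_torus TYPE('k poly fract) ((\<lambda>n. n + c ! i) ` Bset q ((take m0 c)[i := q * c ! m0]))"
    if "i < m0" for i
  proof -
    have "\<forall>x\<in>set ((take m0 c)[i := q * c ! m0]). x \<ge> 1"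
      using assms(6,7) q set_update_subset_insert[of "take m0 c" i]
      by (fastforce dest: in_set_takeD)
    then have "DML_split_torus TYPE('k poly fract) (Bset q ((take m0 c)[i := q * c ! m0]))"
      using assms(5,6) e by simp
    then show ?thesis
      using DML_split_torus_affine_image[OF _ order_refl t] by simp
  qed
  moreover have "length c = Suc m0"
    using assms(6) by simp
  ultimately show ?thesis
    by (simp add: Bset_scaled_last_eq) (intro DML_split_torus_Un DML_split_torus_UN; simp)
qed

end
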